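(* Let $D\subseteq\Phi^+$ be a rook placement and $\xi\colon D\to\mathbb{C}^\times$ a map. Then the subspace $\mathfrak{p}\subseteq\mathfrak{n}$ spanned by the $e_{j,i}$, $(i,j)\in\Phi^+\setminus\mathcal{M}$, is a maximal $f_{D,\xi}$-isotropic subspace of $\mathfrak{n}$; that is, $f_{D,\xi}([x,y])=0$ for all $x,y\in\mathfrak{p}$, and no subspace of $\mathfrak{n}$ strictly containing $\mathfrak{p}$ has this property.
   Context: Let $n\ge1$ and let $\mathfrak{n}$ be the Lie algebra of strictly upper-triangular complex $n\times n$ matrices; $e_{i,j}$ denotes the elementary matrix with $1$ at position $(i,j)$. Identify $\mathfrak{n}^*$ with the strictly lower-triangular matrices via $\lambda(x)=\mathrm{tr}(\lambda x)$. Let $\Phi^+=\{(i,j)\in\mathbb{Z}^2:1\le j<i\le n\}$, with rows $\mathcal{R}_k=\{(k,s)\in\Phi^+\}$ and columns $\mathcal{C}_k=\{(r,k)\in\Phi^+\}$. A rook placement is a subset $D\subseteq\Phi^+$ with $|D\cap\mathcal{R}_k|\le 1$ and $|D\cap\mathcal{C}_k|\le1$ for all $k$. For a map $\xi\colon D\to\mathbb{C}^\times$, $f_{D,\xi}=\sum_{(i,j)\in D}\xi(i,j)e_{i,j}\in\mathfrak{n}^*$. Write $D=\{(i_1,j_1),\dots,(i_s,j_s)\}$ with $j_1<\dots<j_s$. Set $\mathcal{M}_{j_0}=\emptyset$ and, recursively for $r=1,\dots,s$, $\mathcal{M}_{j_r}=\{(i_r,q)\in\Phi^+:\ j_r<q<i_r,\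 (q,j_r)\notin\bigcup_{l=0}^{r-1}\mathcal{M}_{j_l}\}$, and $\mathcal{M}=\bigcup_{r=1}^s\mathcal{M}_{j_r}$. *)

theory Defs
  imports Complex_Main
begin

text \<open>Matrices are modelled as functions nat \<Rightarrow> nat \<Rightarrow> complex, with indices 1..n
  (entries outside 1..n are required to be zero where relevant).\<close>

type_synonym cmat = "nat \<Rightarrow> nat \<Rightarrow> complex"

definition Phi_pos :: "nat \<Rightarrow> (nat \<times> nat) set" where
  "Phi_pos n = {(i, j). 1 \<le> j \<and> j < i \<and> i \<le> n}"

definition nilp :: "nat \<Rightarrow> cmat set" where
  "nilp n = {x. \<forall>i j. x i j \<noteq> 0 \<longrightarrow> 1 \<le> i \<and> i < j \<and> j \<le> n}"

definition elem :: "nat \<Rightarrow> nat \<Rightarrow> cmat" where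
  "elem i j = (\<lambda>a b. if a = i \<and> b = j then 1 else 0)"

definition mmul :: "nat \<Rightarrow> cmat \<Rightarrow> cmat \<Rightarrow> cmat" where
  "mmul n x y = (\<lambda>i k. \<Sum>j = 1..n. x i j * y j k)"

definition bracket :: "nat \<Rightarrow> cmat \<Rightarrow> cmat \<Rightarrow> cmat" where
  "bracket n x y = (\<lambda>i k. mmul n x y i k - mmul n y x i k)"

definition mtrace :: "nat \<Rightarrow> cmat \<Rightarrow> complex" where
  "mtrace n x = (\<Sum>i = 1..n. x i i)"

definition functional :: "nat \<Rightarrow> cmat \<Rightarrow> cmat \<Rightarrow> complex" where
  "functional n lam x = mtrace n (mmul n lam x)"

definition rook_placement :: "nat \<Rightarrow> (nat \<times> nat) set \<Rightarrow> bool" where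
  "rook_placement n D \<longleftrightarrow> D \<subseteq> Phi_pos n \<and>
     (\<forall>k. card {p \<in> D. fst p = k} \<le> 1) \<and> (\<forall>k. card {p \<in> D. snd p = k} \<le> 1)"

definition f_D :: "(nat \<times> nat) set \<Rightarrow> (nat \<times> nat \<Rightarrow> complex) \<Rightarrow> cmat" where
  "f_D D \<xi> = (\<lambda>a b. if (a, b) \<in> D then \<xi> (a, b) else 0)"

text \<open>Mupto n D k = union of the sets M_j over the columns j < k of D
  (processed in increasing column order, as in the recursive definition).\<close>
fun Mupto :: "nat \<Rightarrow> (nat \<times> nat) set \<Rightarrow> nat \<Rightarrow> (nat \<times> nat) set" where
  "Mupto n D 0 = {}"
| "Mupto n D (Suc k) = Mupto n D k \<union>
     {(i, q) \<in> Phi_pos n. (i, k) \<in> D \<and> k < q \<and> q < i \<and> (q, k) \<notin> Mupto n D k}"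

definition Mset :: "nat \<Rightarrow> (nat \<times> nat) set \<Rightarrow> (nat \<times> nat) set" where
  "Mset n D = Mupto n D (Suc n)"

definition span_elems :: "(nat \<times> nat) set \<Rightarrow> cmat set" where
  "span_elems B = {x. \<exists>c. x = (\<lambda>a b. \<Sum>p\<in>B. c p * elem (fst p) (snd p) a b)}"

definition is_subspace :: "nat \<Rightarrow> cmat set \<Rightarrow> bool" where
  "is_subspace n S \<longleftrightarrow> S \<subseteq> nilp n \<and> (\<lambda>a b. 0) \<in> S \<and>
     (\<forall>x\<in>S. \<forall>y\<in>S. (\<lambda>a b. x a b + y a b) \<in> S) \<and>
     (\<forall>c::complex. \<forall>x\<in>S. (\<lambda>a b. c * x a b) \<in> S)"

definition isotropic :: "nat \<Rightarrow> cmat \<Rightarrow> cmat set \<Rightarrow> bool" where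
  "isotropic n lam S \<longleftrightarrow> (\<forall>x\<in>S. \<forall>y\<in>S. functional n lam (bracket n x y) = 0)"

definition max_isotropic :: "nat \<Rightarrow> cmat \<Rightarrow> cmat set \<Rightarrow> bool" where
  "max_isotropic n lam S \<longleftrightarrow> is_subspace n S \<and> isotropic n lam S \<and>
     (\<forall>T. is_subspace n T \<and> S \<subset> T \<longrightarrow> \<not> isotropic n lam T)"

end

theory Submission
  imports Defs
begin

text \<open>
  The functional \<open>f\<^sub>D\<^sub>,\<^sub>\<xi>\<close> only sees the entries \<open>[x, y]\<^sub>b\<^sub>a\<close> with \<open>(a, b) \<in> D\<close>. For \<open>x, y\<close>
  supported on the transpose of \<open>\<Phi>\<^sup>+ - \<M>\<close>, a nonzero product \<open>x\<^sub>b\<^sub>c y\<^sub>c\<^sub>a\<close> would need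
  \<open>b < c < a\<close> with neither \<open>(c, b)\<close> nor \<open>(a, c)\<close> in \<open>\<M>\<close>, but the recursion defining \<open>\<M>\<close> puts
  one of them there; this gives isotropy. For maximality, a strictly upper-triangular \<open>x\<close>
  outside the span has a nonzero entry \<open>x\<^sub>q\<^sub>i\<close> with \<open>(i, q) \<in> \<M>\<^sub>j\<close>, \<open>(i, j) \<in> D\<close>. Taking \<open>j\<close>
  minimal, \<open>e\<^sub>j\<^sub>q\<close> lies in the span and every rook \<open>(q, b)\<close> has \<open>x\<^sub>b\<^sub>j = 0\<close> (otherwise \<open>(j, b)\<close>
  would already lie in \<open>\<M>\<^sub>k\<close> for a column \<open>k < j\<close>), so \<open>f\<^sub>D\<^sub>,\<^sub>\<xi>([x, e\<^sub>j\<^sub>q]) = -\<xi>(i, j) x\<^sub>q\<^sub>i \<noteq> 0\<close>.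
\<close>

lemma finite_Phi_pos: "finite (Phi_pos n)"
proof (rule finite_subset)
  show "Phi_pos n \<subseteq> {1..n} \<times> {1..n}" unfolding Phi_pos_def by auto
qed simp

lemma Mupto_mono: "k \<le> k' \<Longrightarrow> Mupto n D k \<subseteq> Mupto n D k'"
  by (induction k') (auto simp: le_Suc_eq)

lemma mem_Mupto_iff:
  "(i, q) \<in> Mupto n D K \<longleftrightarrow>
     (\<exists>k<K. (i, q) \<in> Phi_pos n \<and> (i, k) \<in> D \<and> k < q \<and> q < i \<and> (q, k) \<notin> Mupto n D k)"
proof
  show "(i, q) \<in> Mupto n D K \<Longrightarrow> \<exists>k<K. (i, q) \<in> Phi_pos n \<and> (i, k) \<in> D \<and> k < q \<and> q < i \<and> (q, k) \<notin> Mupto n D k"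
    by (induction K) (auto intro: less_SucI)
next
  assume "\<exists>k<K. (i, q) \<in> Phi_pos n \<and> (i, k) \<in> D \<and> k < q \<and> q < i \<and> (q, k) \<notin> Mupto n D k"
  then obtain k where "k < K" "(i, q) \<in> Mupto n D (Suc k)" by auto
  then show "(i, q) \<in> Mupto n D K" using Mupto_mono[of "Suc k" K n D] by auto
qed

lemma Mset_triangle:
  assumes "D \<subseteq> Phi_pos n" "(a, b) \<in> D" "b < c" "c < a"
  shows "(c, b) \<in> Mset n D \<or> (a, c) \<in> Mset n D"
proof -
  have "a \<le> n" "(a, c) \<in> Phi_pos n" using assms unfolding Phi_pos_def by auto
  then have "(c, b) \<in> Mupto n D b \<or> (a, c) \<in> Mupto n D (Suc b)" using assms by auto
  moreover have "Mupto n D (Suc b) \<subseteq> Mset n D"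
    unfolding Mset_def using \<open>a \<le> n\<close> assms(4,3) by (intro Mupto_mono) simp
  ultimately show ?thesis using Mupto_mono[of b "Suc b" n D] by auto
qed

lemma mem_span_elems_iff:
  assumes "finite B"
  shows "x \<in> span_elems B \<longleftrightarrow> (\<forall>u v. x u v \<noteq> 0 \<longrightarrow> (u, v) \<in> B)"
proof
  assume "x \<in> span_elems B"
  then obtain c where c: "x = (\<lambda>a b. \<Sum>p\<in>B. c p * elem (fst p) (snd p) a b)"
    unfolding span_elems_def by blast
  show "\<forall>u v. x u v \<noteq> 0 \<longrightarrow> (u, v) \<in> B"
  proof (intro allI impI; rule ccontr)
    fix u v assume "x u v \<noteq> 0" "(u, v) \<notin> B"
    then show False by (auto simp: c elem_def intro!: sum.neutral)
  qed
next
  assume supp: "\<forall>u v. x u v \<noteq> 0 \<longrightarrow> (u, v) \<in> B"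
  have "x u v = (\<Sum>p\<in>B. x (fst p) (snd p) * elem (fst p) (snd p) u v)" for u v
  proof -
    have "(\<Sum>p\<in>B. x (fst p) (snd p) * elem (fst p) (snd p) u v)
        = (\<Sum>p\<in>B. if p = (u, v) then x u v else 0)"
      by (rule sum.cong) (auto simp: elem_def)
    also have "\<dots> = x u v" using assms supp by auto
    finally show ?thesis by simp
  qed
  then show "x \<in> span_elems B"
    unfolding span_elems_def by (intro CollectI exI[of _ "\<lambda>p. x (fst p) (snd p)"] ext)
qed

lemma is_subspace_span_elems:
  assumes "finite B" "\<And>u v. (u, v) \<in> B \<Longrightarrow> 1 \<le> u \<and> u < v \<and> v \<le> n"
  shows "is_subspace n (span_elems B)"
  using assms by (auto simp: is_subspace_def nilp_def mem_span_elems_iff) force+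

lemma functional_f_D:
  assumes "D \<subseteq> Phi_pos n"
  shows "functional n (f_D D \<xi>) z = (\<Sum>(a, b)\<in>D. \<xi> (a, b) * z b a)"
proof -
  have "functional n (f_D D \<xi>) z = (\<Sum>(a, b)\<in>{1..n} \<times> {1..n}. f_D D \<xi> a b * z b a)"
    unfolding functional_def mtrace_def mmul_def by (simp add: sum.cartesian_product)
  also have "\<dots> = (\<Sum>(a, b)\<in>D. f_D D \<xi> a b * z b a)"
    using assms by (intro sum.mono_neutral_right) (auto simp: Phi_pos_def f_D_def)
  also have "\<dots> = (\<Sum>(a, b)\<in>D. \<xi> (a, b) * z b a)"
    by (intro sum.cong) (auto simp: f_D_def)
  finally show ?thesis .
qed

lemma bracket_elem_right:
  assumes "j \<in> {1..n}" "q \<in> {1..n}"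
  shows "bracket n x (elem j q) b a = (if a = q then x b j else 0) - (if b = j then x q a else 0)"
proof -
  have "(\<Sum>c = 1..n. x b c * elem j q c a) = (\<Sum>c = 1..n. if c = j then (if a = q then x b j else 0) else 0)"
    by (rule sum.cong) (auto simp: elem_def)
  moreover have "(\<Sum>c = 1..n. elem j q b c * x c a) = (\<Sum>c = 1..n. if c = q then (if b = j then x q a else 0) else 0)"
    by (rule sum.cong) (auto simp: elem_def)
  ultimately show ?thesis using assms unfolding bracket_def mmul_def by simp
qed

lemma rook_placement_same_column:
  assumes "rook_placement n D" "(a, j) \<in> D" "(a', j) \<in> D"
  shows "a = a'"
proof -
  have "finite D" using assms(1) finite_Phi_pos finite_subset unfolding rook_placement_def by blast
  moreover have "card {p \<in> D. snd p = j} \<le> 1" using assms(1) unfolding rook_placement_def by blast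
  ultimately show ?thesis using assms(2,3) card_le_Suc0_iff_eq[of "{p \<in> D. snd p = j}"] by fastforce
qed

definition polarization_support :: "nat \<Rightarrow> (nat \<times> nat) set \<Rightarrow> (nat \<times> nat) set" where
  "polarization_support n D = (\<lambda>(i, j). (j, i)) ` (Phi_pos n - Mset n D)"

lemma mem_span_polarization_support_iff:
  "x \<in> span_elems (polarization_support n D) \<longleftrightarrow>
     (\<forall>u v. x u v \<noteq> 0 \<longrightarrow> (v, u) \<in> Phi_pos n \<and> (v, u) \<notin> Mset n D)"
proof -
  have "(u, v) \<in> polarization_support n D \<longleftrightarrow> (v, u) \<in> Phi_pos n \<and> (v, u) \<notin> Mset n D" for u v
    unfolding polarization_support_def by force
  moreover have "finite (polarization_support n D)"
    unfolding polarization_support_def using finite_Phi_pos by simp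
  ultimately show ?thesis by (simp add: mem_span_elems_iff)
qed

lemma is_subspace_polarization: "is_subspace n (span_elems (polarization_support n D))"
proof (rule is_subspace_span_elems)
  show "finite (polarization_support n D)"
    unfolding polarization_support_def using finite_Phi_pos by simp
qed (auto simp: polarization_support_def Phi_pos_def)

lemma isotropic_polarization:
  assumes "D \<subseteq> Phi_pos n"
  shows "isotropic n (f_D D \<xi>) (span_elems (polarization_support n D))"
  unfolding isotropic_def
proof (intro ballI)
  let ?P = "span_elems (polarization_support n D)"
  have vanish: "x b c * y c a = 0" if "x \<in> ?P" "y \<in> ?P" "(a, b) \<in> D" for x y a b c
  proof (rule ccontr)
    assume "x b c * y c a \<noteq> 0"
    then have "(c, b) \<in> Phi_pos n - Mset n D" "(a, c) \<in> Phi_pos n - Mset n D"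
      using that(1,2) by (auto simp: mem_span_polarization_support_iff)
    then show False using Mset_triangle[OF assms that(3)] unfolding Phi_pos_def by auto
  qed
  fix x y assume "x \<in> ?P" "y \<in> ?P"
  then have "bracket n x y b a = 0" if "(a, b) \<in> D" for a b
    using vanish[of x y a b] vanish[of y x a b] that unfolding bracket_def mmul_def
    by (simp add: sum.neutral del: mult_eq_0_iff)
  then show "functional n (f_D D \<xi>) (bracket n x y) = 0"
    unfolding functional_f_D[OF assms] by (intro sum.neutral) auto
qed

lemma Mset_obstruction:
  assumes "D \<subseteq> Phi_pos n" "x \<in> nilp n" "(i\<^sub>0, q\<^sub>0) \<in> Mset n D" "x q\<^sub>0 i\<^sub>0 \<noteq> 0"
  obtains i j q where "(i, j) \<in> D" "x q i \<noteq> 0" "(q, j) \<in> Phi_pos n" "(q, j) \<notin> Mset n D"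
    "\<And>b. (q, b) \<in> D \<Longrightarrow> x b j = 0"
proof -
  define Q where "Q k \<longleftrightarrow> (\<exists>i q. x q i \<noteq> 0 \<and> (i, q) \<in> Phi_pos n \<and> (i, k) \<in> D \<and> k < q \<and> q < i
      \<and> (q, k) \<notin> Mupto n D k)" for k
  have "\<exists>k. Q k"
    using assms(3,4) mem_Mupto_iff[of i\<^sub>0 q\<^sub>0 n D "Suc n"] unfolding Q_def Mset_def by blast
  define j where "j = (LEAST k. Q k)"
  have "Q j" unfolding j_def using \<open>\<exists>k. Q k\<close> by (metis LeastI)
  then obtain i q where iq: "x q i \<noteq> 0" "(i, q) \<in> Phi_pos n" "(i, j) \<in> D" "j < q" "q < i"
      "(q, j) \<notin> Mupto n D j"
    unfolding Q_def by blast
  have qj: "(q, j) \<in> Phi_pos n" using iq assms(1) unfolding Phi_pos_def by auto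
  have early: "(q, j) \<notin> Mupto n D (Suc k)" if "k < j" for k
    using iq(6) Mupto_mono[of "Suc k" j n D] that by (meson Suc_leI subsetD)
  show thesis
  proof (rule that[OF iq(3,1) qj])
    show "(q, j) \<notin> Mset n D"
    proof
      assume "(q, j) \<in> Mset n D"
      then obtain k where "k < j" "(q, j) \<in> Phi_pos n" "(q, k) \<in> D" "j < q" "(j, k) \<notin> Mupto n D k"
        using mem_Mupto_iff[of q j n D "Suc n"] unfolding Mset_def by blast
      then have "(q, j) \<in> Mupto n D (Suc k)" by simp
      then show False using early \<open>k < j\<close> by blast
    qed
  next
    fix b assume qb: "(q, b) \<in> D"
    show "x b j = 0"
    proof (rule ccontr)
      assume xbj: "x b j \<noteq> 0"
      then have "b < j" using assms(2) unfolding nilp_def by auto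
      then have "(j, b) \<in> Mupto n D b" using early[of b] qj qb iq(4) by simp
      then obtain k where "k < b" "Q k"
        using mem_Mupto_iff[of j b n D b] xbj unfolding Q_def by blast
      then show False using \<open>b < j\<close> not_less_Least[of k Q] unfolding j_def by simp
    qed
  qed
qed

lemma exists_non_isotropic_partner:
  assumes "rook_placement n D" "\<forall>p\<in>D. \<xi> p \<noteq> 0" "x \<in> nilp n"
    "x \<notin> span_elems (polarization_support n D)"
  shows "\<exists>y\<in>span_elems (polarization_support n D). functional n (f_D D \<xi>) (bracket n x y) \<noteq> 0"
proof -
  have D: "D \<subseteq> Phi_pos n" using assms(1) unfolding rook_placement_def by blast
  obtain u v where uv: "x u v \<noteq> 0" "(v, u) \<notin> Phi_pos n \<or> (v, u) \<in> Mset n D"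
    using assms(4) by (auto simp: mem_span_polarization_support_iff)
  moreover have "(v, u) \<in> Phi_pos n" using uv(1) assms(3) unfolding nilp_def Phi_pos_def by auto
  ultimately obtain i j q where ij: "(i, j) \<in> D" and xqi: "x q i \<noteq> 0"
    and qj: "(q, j) \<in> Phi_pos n" "(q, j) \<notin> Mset n D" and row_q: "\<And>b. (q, b) \<in> D \<Longrightarrow> x b j = 0"
    using Mset_obstruction[OF D assms(3)] by blast
  have jq: "j \<in> {1..n}" "q \<in> {1..n}" using qj(1) unfolding Phi_pos_def by auto
  have "elem j q \<in> span_elems (polarization_support n D)"
    using qj by (auto simp: mem_span_polarization_support_iff elem_def)
  moreover have "functional n (f_D D \<xi>) (bracket n x (elem j q)) = - (\<xi> (i, j) * x q i)"
  proof -
    have summand: "(case p of (a, b) \<Rightarrow> \<xi> (a, b) * bracket n x (elem j q) b a)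
        = (if p = (i, j) then - (\<xi> (i, j) * x q i) else 0)" if "p \<in> D" for p
      using that ij row_q rook_placement_same_column[OF assms(1)]
      by (cases p) (auto simp: bracket_elem_right[OF jq])
    have "functional n (f_D D \<xi>) (bracket n x (elem j q))
        = (\<Sum>p\<in>D. if p = (i, j) then - (\<xi> (i, j) * x q i) else 0)"
      unfolding functional_f_D[OF D] by (rule sum.cong[OF refl summand])
    also have "\<dots> = - (\<xi> (i, j) * x q i)"
      using D finite_Phi_pos ij by (simp add: finite_subset)
    finally show ?thesis .
  qed
  ultimately show ?thesis using assms(2) ij xqi by force
qed

theorem proposition2p7:
  fixes n :: nat and D :: "(nat \<times> nat) set" and \<xi> :: "nat \<times> nat \<Rightarrow> complex"
  assumes "1 \<le> n"
    and "rook_placement n D"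
    and "\<forall>p\<in>D. \<xi> p \<noteq> 0"
  shows "max_isotropic n (f_D D \<xi>)
           (span_elems ((\<lambda>(i, j). (j, i)) ` (Phi_pos n - Mset n D)))"
proof -
  let ?P = "span_elems (polarization_support n D)"
  have D: "D \<subseteq> Phi_pos n" using assms(2) unfolding rook_placement_def by blast
  have maximal: "\<not> isotropic n (f_D D \<xi>) T" if T: "is_subspace n T" "?P \<subset> T" for T
  proof -
    obtain x where x: "x \<in> T" "x \<notin> ?P" using T(2) by blast
    then have "x \<in> nilp n" using T(1) unfolding is_subspace_def by blast
    then obtain y where "y \<in> ?P" "functional n (f_D D \<xi>) (bracket n x y) \<noteq> 0"
      using exists_non_isotropic_partner[OF assms(2,3)] x(2) by blast
    then show ?thesis using T(2) x(1) unfolding isotropic_def by blast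
  qed
  have "max_isotropic n (f_D D \<xi>) ?P"
    unfolding max_isotropic_def
    using is_subspace_polarization isotropic_polarization[OF D] maximal by blast
  then show ?thesis unfolding polarization_support_def .
qed

end
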